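(* Let $Q=(V,E)$ be a natural join query over binary relations, and let $I$ be an instance in which every relation has at most $N\ge1$ tuples. Let $T_0=R_0^I$ for some relation $R_0\in E$. For $j=0,\dots,m-1$, let $T_{j+1}=T_j\bowtie R_j^I$, where $R_j(X_j,Y_j)\in E$ is a relation such that $X_j$ is an attribute of $T_j$ and $R_j^I$ is light in $X_j$. Let $k$ be the number of distinct attributes of $T_m$. Then $$|T_m|\le N^{k/2}\le\mathrm{AGM}(Q).$$
   Context: A natural join query over binary relations consists of relation symbols, each having exactly two distinct attributes; relations are sets of tuples. The query graph $(V,E)$ has one vertex per attribute and one edge per relation. For a relation $R$ with attribute $X$ and a value $a$, the degree is $d_R(a)=|\{t\in R:t.X=a\}|$. $R$ is light in $X$ if $d_R(a)\le\sqrt N$ for every value $a$. A fractional vertex packing is a map $u:V\to[0,1]$ with $u_x+u_y\le 1$ for every edge $\{x,y\}\in E$. Define $\mathrm{AGM}(Q)=\max_u N^{\sum_{x\in V}u_x}$, the maximum taken over fractional vertex packings $u$. *)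

theory Defs
  imports Complex_Main
begin

(* Tuples over an attribute set A are partial maps with domain exactly A.
   A query is a set E of relation symbols; att r = (x,y) gives the two
   (distinct) attributes of r. *)

definition query_vertices :: "'r set \<Rightarrow> ('r \<Rightarrow> 'a \<times> 'a) \<Rightarrow> 'a set" where
  "query_vertices E att = (\<Union>r\<in>E. {fst (att r), snd (att r)})"

definition is_instance :: "'r set \<Rightarrow> ('r \<Rightarrow> 'a \<times> 'a) \<Rightarrow> ('r \<Rightarrow> ('a \<rightharpoonup> 'v) set) \<Rightarrow> bool" where
  "is_instance E att I \<longleftrightarrow>
     (\<forall>r\<in>E. finite (I r) \<and> (\<forall>t\<in>I r. dom t = {fst (att r), snd (att r)}))"

definition njoin :: "'a set \<Rightarrow> ('a \<rightharpoonup> 'v) set \<Rightarrow> 'a set \<Rightarrow> ('a \<rightharpoonup> 'v) set \<Rightarrow> ('a \<rightharpoonup> 'v) set" where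
  "njoin A T B S = {t. dom t = A \<union> B \<and> t |` A \<in> T \<and> t |` B \<in> S}"

definition degree :: "('a \<rightharpoonup> 'v) set \<Rightarrow> 'a \<Rightarrow> 'v \<Rightarrow> nat" where
  "degree R X a = card {t \<in> R. t X = Some a}"

definition light_in :: "real \<Rightarrow> ('a \<rightharpoonup> 'v) set \<Rightarrow> 'a \<Rightarrow> bool" where
  "light_in N R X \<longleftrightarrow> (\<forall>a. real (degree R X a) \<le> sqrt N)"

definition fractional_vertex_packing :: "'r set \<Rightarrow> ('r \<Rightarrow> 'a \<times> 'a) \<Rightarrow> ('a \<Rightarrow> real) \<Rightarrow> bool" where
  "fractional_vertex_packing E att u \<longleftrightarrow>
     (\<forall>x\<in>query_vertices E att. 0 \<le> u x \<and> u x \<le> 1) \<and>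
     (\<forall>r\<in>E. u (fst (att r)) + u (snd (att r)) \<le> 1)"

definition AGM :: "real \<Rightarrow> 'r set \<Rightarrow> ('r \<Rightarrow> 'a \<times> 'a) \<Rightarrow> real" where
  "AGM N E att = (SUP u \<in> {u. fractional_vertex_packing E att u}.
                    N powr (\<Sum>x\<in>query_vertices E att. u x))"

end

theory Submission
  imports Defs
begin

(* Joining tuples T over schema A with a relation S whose degrees in some x \<in> A are at most c
   yields at most c * |T| tuples, since each tuple of T fixes the value at x; and if the join adds
   no attribute it stays inside T. So, starting from one relation of size N = sqrt N ^ 2 over two
   attributes, every light join step preserves |T_j| \<le> sqrt N ^ |A_j| = N powr (|A_j|/2). The AGM
   bound dominates this value, witnessed by the packing that is 1/2 on A_m and 0 elsewhere. *)

lemma restrict_map_Un_eqI: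
  assumes "dom t = A \<union> B" "dom t' = A \<union> B" "t |` A = t' |` A" "t |` B = t' |` B"
  shows "t = t'"
proof
  fix z
  show "t z = t' z"
  proof (cases "z \<in> A \<union> B")
    case True
    then show ?thesis
      using fun_cong[OF assms(3), of z] fun_cong[OF assms(4), of z] by (auto simp: restrict_map_def)
  next
    case False
    then show ?thesis using assms(1,2) by (metis domIff)
  qed
qed

lemma njoin_subset:
  assumes "B \<subseteq> A" "\<forall>t\<in>T. dom t = A"
  shows "njoin A T B S \<subseteq> T"
proof
  fix t assume t: "t \<in> njoin A T B S"
  then have "t |` A = t" using assms(1) by (auto simp: njoin_def restrict_map_def fun_eq_iff domIff)
  then show "t \<in> T" using t by (auto simp: njoin_def)
qed

lemma
  fixes T S :: "('a \<rightharpoonup> 'v) set"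
  assumes finT: "finite T" and finS: "finite S" and domT: "\<forall>t\<in>T. dom t = A"
    and x: "x \<in> A" "x \<in> B" and deg: "\<forall>a. real (degree S x a) \<le> c"
  shows finite_njoin: "finite (njoin A T B S)"
    and card_njoin_le_degree: "real (card (njoin A T B S)) \<le> real (card T) * c"
proof -
  let ?J = "njoin A T B S"
  let ?split = "\<lambda>t. (t |` A, t |` B)"
  let ?matches = "Sigma T (\<lambda>s. {r \<in> S. r x = s x})"
  have inj: "inj_on ?split ?J"
    by (rule inj_onI) (auto simp: njoin_def intro: restrict_map_Un_eqI)
  have img: "?split ` ?J \<subseteq> ?matches"
    using x by (auto simp: njoin_def restrict_map_def)
  have fin_matches: "finite ?matches" using finT finS by auto
  show "finite ?J"
    using finite_imageD[OF finite_subset[OF img fin_matches] inj] .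
  have matches_le: "real (card {r \<in> S. r x = s x}) \<le> c" if "s \<in> T" for s
  proof -
    have "x \<in> dom s" using domT that x(1) by simp
    then obtain a where "s x = Some a" by auto
    then show ?thesis using deg by (simp add: degree_def)
  qed
  have "real (card ?J) \<le> real (card ?matches)"
    using card_inj_on_le[OF inj img fin_matches] by simp
  also have "\<dots> = (\<Sum>s\<in>T. real (card {r \<in> S. r x = s x}))"
    using finT finS by (simp add: card_SigmaI)
  also have "\<dots> \<le> real (card T) * c"
    using sum_mono[of T _ "\<lambda>_. c"] matches_le by simp
  finally show "real (card ?J) \<le> real (card T) * c" .
qed

lemma card_njoin_light_le:
  fixes T S :: "('a \<rightharpoonup> 'v) set"
  assumes finT: "finite T" and finS: "finite S" and domT: "\<forall>t\<in>T. dom t = A"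
    and finAB: "finite (A \<union> B)" and x: "x \<in> A" "x \<in> B"
    and deg: "\<forall>a. real (degree S x a) \<le> c" and c: "1 \<le> c"
    and card_T: "real (card T) \<le> c ^ card A"
  shows "real (card (njoin A T B S)) \<le> c ^ card (A \<union> B)"
proof (cases "B \<subseteq> A")
  case True
  then have "card (njoin A T B S) \<le> card T"
    using njoin_subset[OF _ domT] finT by (simp add: card_mono)
  then show ?thesis using True card_T by (simp add: Un_absorb2)
next
  case False
  then obtain y where y: "y \<in> B" "y \<notin> A" by blast
  have "Suc (card A) = card (insert y A)" using y finAB by simp
  also have "\<dots> \<le> card (A \<union> B)" using y finAB by (intro card_mono) auto
  finally have grow: "Suc (card A) \<le> card (A \<union> B)" .
  have "real (card (njoin A T B S)) \<le> real (card T) * c"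
    using card_njoin_le_degree[OF finT finS domT x deg] .
  also have "\<dots> \<le> c ^ Suc (card A)"
    using card_T c by (simp add: mult.commute mult_left_mono)
  also have "\<dots> \<le> c ^ card (A \<union> B)"
    using grow c by (rule power_increasing)
  finally show ?thesis .
qed

lemma card_light_join_chain_le:
  fixes T :: "nat \<Rightarrow> ('a \<rightharpoonup> 'v) set"
  assumes c: "1 \<le> c"
    and fin0: "finite (T 0)" "finite (A 0)" and dom0: "\<forall>t\<in>T 0. dom t = A 0"
    and card0: "real (card (T 0)) \<le> c ^ card (A 0)"
    and light: "\<And>j. j < m \<Longrightarrow> finite (S j) \<and> finite (B j) \<and> X j \<in> A j \<and> X j \<in> B j
      \<and> (\<forall>a. real (degree (S j) (X j) a) \<le> c)"
    and A_step: "\<And>j. j < m \<Longrightarrow> A (Suc j) = A j \<union> B j"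
    and T_step: "\<And>j. j < m \<Longrightarrow> T (Suc j) = njoin (A j) (T j) (B j) (S j)"
  shows "real (card (T m)) \<le> c ^ card (A m)"
proof -
  have "finite (T j) \<and> finite (A j) \<and> (\<forall>t\<in>T j. dom t = A j) \<and> real (card (T j)) \<le> c ^ card (A j)"
    if "j \<le> m" for j
    using that
  proof (induction j)
    case 0
    then show ?case using fin0 dom0 card0 by blast
  next
    case (Suc j)
    then have IH: "finite (T j)" "finite (A j)" "\<forall>t\<in>T j. dom t = A j"
        "real (card (T j)) \<le> c ^ card (A j)"
      and S: "finite (S j)" "finite (B j)" "X j \<in> A j" "X j \<in> B j"
        "\<forall>a. real (degree (S j) (X j) a) \<le> c"
      using light by auto
    have "finite (A j \<union> B j)" using IH(2) S(2) by simp
    note card_step = card_njoin_light_le[OF IH(1) S(1) IH(3) this S(3,4,5) c IH(4)]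
    have "finite (T (Suc j))"
      using finite_njoin[OF IH(1) S(1) IH(3) S(3,4,5)] T_step Suc.prems by simp
    moreover have "\<forall>t\<in>T (Suc j). dom t = A (Suc j)"
      using T_step A_step Suc.prems by (simp add: njoin_def)
    ultimately show ?case using IH(2) S(2) card_step A_step T_step Suc.prems by simp
  qed
  then show ?thesis by blast
qed

lemma powr_half_eq_sqrt_power:
  fixes N :: real
  assumes "0 < N"
  shows "N powr (real k / 2) = sqrt N ^ k"
proof -
  have "N powr (real k / 2) = (N powr (1 / 2)) powr real k" by (simp add: powr_powr)
  also have "\<dots> = sqrt N ^ k" using assms by (simp add: powr_half_sqrt powr_realpow)
  finally show ?thesis .
qed

lemma AGM_ge_powr_half_card:
  assumes finE: "finite E" and N: "1 \<le> N" and W: "W \<subseteq> query_vertices E att"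
  shows "N powr (real (card W) / 2) \<le> AGM N E att"
  unfolding AGM_def
proof (rule cSUP_upper2)
  let ?V = "query_vertices E att"
  let ?u = "\<lambda>x. if x \<in> W then 1 / 2 else 0 :: real"
  show "?u \<in> {u. fractional_vertex_packing E att u}"
    by (simp add: fractional_vertex_packing_def)
  have "finite ?V" using finE by (simp add: query_vertices_def)
  then have sum_u: "(\<Sum>x\<in>?V. ?u x) = real (card W) / 2"
    using W by (simp add: sum.If_cases Int_absorb1)
  show "N powr (real (card W) / 2) \<le> N powr (\<Sum>x\<in>?V. ?u x)"
    unfolding sum_u ..
  show "bdd_above ((\<lambda>u. N powr (\<Sum>x\<in>?V. u x)) ` {u. fractional_vertex_packing E att u})"
  proof (rule bdd_aboveI2)
    fix u assume "u \<in> {u. fractional_vertex_packing E att u}"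
    then have "(\<Sum>x\<in>?V. u x) \<le> (\<Sum>x\<in>?V. 1)"
      by (intro sum_mono) (simp add: fractional_vertex_packing_def)
    then show "N powr (\<Sum>x\<in>?V. u x) \<le> N powr real (card ?V)"
      using N by (intro powr_mono) auto
  qed
qed

theorem mainTheorem4:
  fixes E :: "'r set" and att :: "'r \<Rightarrow> 'a \<times> 'a"
    and I :: "'r \<Rightarrow> ('a \<rightharpoonup> 'v) set" and N :: real
    and R0 :: 'r and R :: "nat \<Rightarrow> 'r" and X :: "nat \<Rightarrow> 'a"
    and T :: "nat \<Rightarrow> ('a \<rightharpoonup> 'v) set" and A :: "nat \<Rightarrow> 'a set" and m :: nat
  assumes finE: "finite E"
    and distinct_att: "\<forall>r\<in>E. fst (att r) \<noteq> snd (att r)"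
    and inst: "is_instance E att I"
    and N_ge: "N \<ge> 1"
    and sizes: "\<forall>r\<in>E. real (card (I r)) \<le> N"
    and R0_in: "R0 \<in> E"
    and T0: "T 0 = I R0" and A0: "A 0 = {fst (att R0), snd (att R0)}"
    and R_in: "\<forall>j<m. R j \<in> E"
    and X_att: "\<forall>j<m. X j \<in> {fst (att (R j)), snd (att (R j))}"
    and X_in_T: "\<forall>j<m. X j \<in> A j"
    and light: "\<forall>j<m. light_in N (I (R j)) (X j)"
    and A_step: "\<forall>j<m. A (Suc j) = A j \<union> {fst (att (R j)), snd (att (R j))}"
    and T_step: "\<forall>j<m. T (Suc j) = njoin (A j) (T j) {fst (att (R j)), snd (att (R j))} (I (R j))"
  shows "real (card (T m)) \<le> N powr (real (card (A m)) / 2)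
       \<and> N powr (real (card (A m)) / 2) \<le> AGM N E att"
proof -
  let ?B = "\<lambda>j. {fst (att (R j)), snd (att (R j))}"
  have "card (A 0) = 2" using A0 distinct_att R0_in by simp
  then have card0: "real (card (T 0)) \<le> sqrt N ^ card (A 0)"
    using sizes R0_in N_ge by (simp add: T0)
  have fin0: "finite (T 0)" "finite (A 0)" and dom0: "\<forall>t\<in>T 0. dom t = A 0"
    using inst R0_in by (auto simp: T0 A0 is_instance_def)
  have light_step: "finite (I (R j)) \<and> finite (?B j) \<and> X j \<in> A j \<and> X j \<in> ?B j
      \<and> (\<forall>a. real (degree (I (R j)) (X j) a) \<le> sqrt N)" if "j < m" for j
    using inst R_in X_in_T X_att light that by (simp add: is_instance_def light_in_def)
  have "real (card (T m)) \<le> sqrt N ^ card (A m)"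
    using N_ge A_step T_step
    by (intro card_light_join_chain_le[where T = T and A = A and B = ?B and S = "\<lambda>j. I (R j)",
          OF _ fin0 dom0 card0 light_step]) auto
  moreover have "A j \<subseteq> query_vertices E att" if "j \<le> m" for j
    using that
    by (induction j) (use A0 A_step R0_in R_in in \<open>auto simp: query_vertices_def\<close>)
  ultimately show ?thesis
    using AGM_ge_powr_half_card[OF finE N_ge, of "A m" att] N_ge
    by (simp add: powr_half_eq_sqrt_power)
qed

end
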